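(* Let $(H_1,+_1,\circ_1)$ and $(H_2,+_2,\circ_2)$ be commutative multiplicative hyperrings with identity. Let $P_1$ be a weakly sdf-absorbing strong $\mathcal{C}$-hyperideal of $H_1$ that is not an sdf-absorbing hyperideal, and let $P_2$ be a weakly sdf-absorbing strong $\mathcal{C}$-hyperideal of $H_2$ that is not an sdf-absorbing hyperideal. Then the following are equivalent: (i) $P_1\times P_2$ is a weakly sdf-absorbing hyperideal of $H_1\times H_2$ but is not an sdf-absorbing hyperideal; (ii) $P_1\times P_2$ is a weakly sdf-absorbing hyperideal of $H_1\times H_2$; (iii) if $x^2-y^2\subseteq P_1$ for $x,y\in H_1$, then $0\in x^2-y^2$, and if $u^2-v^2\subseteq P_2$ for $u,v\in H_2$, then $0\in u^2-v^2$; (iv) if $a^2-b^2\subseteq P_1\times P_2$ for $(0,0)\neq a,b\in H_1\times H_2$, then $(0,0)\in a^2-b^2$.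
   Context: A commutative multiplicative hyperring $(H,+,\circ)$ consists of an abelian group $(H,+)$ and an associative, commutative hyperoperation $\circ: H\times H\to P^*(H)$ with $x\circ(y+z)\subseteq x\circ y+x\circ z$ and $x\circ(-y)=-(x\circ y)=(-x)\circ y$. For subsets $A,B$, $A\circ B=\bigcup_{a\in A,b\in B}a\circ b$, $A\pm B=\{a\pm b\}$; $x^2=x\circ x$. Identity: $x\in x\circ 1$ for all $x$. $H_1\times H_2$ is the hyperring with $(x_1,x_2)+(y_1,y_2)=(x_1+_1y_1,x_2+_2y_2)$ and $(x_1,x_2)\circ(y_1,y_2)=\{(a,b): a\in x_1\circ_1y_1, b\in x_2\circ_2y_2\}$. A hyperideal is a nonempty $P$ with $x-y\in P$ and $r\circ x\subseteq P$ for $x,y\in P$, $r\in H$. Let $\mathcal{C}=\{c_1\circ\cdots\circ c_n: c_i\in H\}$ and $\mathfrak{C}=\{\sum_{i=1}^m C_i: C_i\in\mathcal{C}\}$; $P$ is a strong $\mathcal{C}$-hyperideal if for every $D\in\mathfrak{C}$, $D\cap P\neq\varnothing$ implies $D\subseteq P$. A proper hyperideal $P$ is sdf-absorbing if whenever $x,y$ are nonzero and $x^2-y^2\subseteq P$, then $x-y\in P$ or $x+y\in P$; it is weakly sdf-absorbing if whenever $x,y$ are nonzero and $0\notin x^2-y^2\subseteq P$, then $x-y\in P$ or $x+y\in P$. *)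

theory Defs
  imports Main "HOL-Library.Product_Plus"
begin

text \<open>A commutative multiplicative hyperring: the additive group is the ambient
type (class ab_group_add); the hyperoperation is a parameter
m :: 'a => 'a => 'a set.\<close>

definition hsetmult :: "('a \<Rightarrow> 'a \<Rightarrow> 'a set) \<Rightarrow> 'a set \<Rightarrow> 'a set \<Rightarrow> 'a set" where
  "hsetmult m A B = (\<Union>a\<in>A. \<Union>b\<in>B. m a b)"

definition setplus :: "'a::plus set \<Rightarrow> 'a set \<Rightarrow> 'a set" where
  "setplus A B = {a + b | a b. a \<in> A \<and> b \<in> B}"

definition setminus :: "'a::minus set \<Rightarrow> 'a set \<Rightarrow> 'a set" where
  "setminus A B = {a - b | a b. a \<in> A \<and> b \<in> B}"

definition hsq :: "('a \<Rightarrow> 'a \<Rightarrow> 'a set) \<Rightarrow> 'a \<Rightarrow> 'a set" where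
  "hsq m x = m x x"

definition comm_mult_hyperring :: "('a::ab_group_add \<Rightarrow> 'a \<Rightarrow> 'a set) \<Rightarrow> bool" where
  "comm_mult_hyperring m \<longleftrightarrow>
     (\<forall>x y. m x y \<noteq> {}) \<and>
     (\<forall>x y z. hsetmult m (m x y) {z} = hsetmult m {x} (m y z)) \<and>
     (\<forall>x y. m x y = m y x) \<and>
     (\<forall>x y z. m x (y + z) \<subseteq> setplus (m x y) (m x z)) \<and>
     (\<forall>x y. m x (- y) = uminus ` (m x y) \<and> m (- x) y = uminus ` (m x y))"

definition has_identity :: "('a \<Rightarrow> 'a \<Rightarrow> 'a set) \<Rightarrow> bool" where
  "has_identity m \<longleftrightarrow> (\<exists>e. \<forall>x. x \<in> m x e)"

definition prod_hmult :: "('a \<Rightarrow> 'a \<Rightarrow> 'a set) \<Rightarrow> ('b \<Rightarrow> 'b \<Rightarrow> 'b set)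
    \<Rightarrow> ('a \<times> 'b) \<Rightarrow> ('a \<times> 'b) \<Rightarrow> ('a \<times> 'b) set" where
  "prod_hmult m1 m2 x y = m1 (fst x) (fst y) \<times> m2 (snd x) (snd y)"

definition hyperideal :: "('a::ab_group_add \<Rightarrow> 'a \<Rightarrow> 'a set) \<Rightarrow> 'a set \<Rightarrow> bool" where
  "hyperideal m P \<longleftrightarrow> P \<noteq> {} \<and> (\<forall>x\<in>P. \<forall>y\<in>P. x - y \<in> P) \<and>
     (\<forall>r. \<forall>x\<in>P. m r x \<subseteq> P)"

fun hlprod :: "('a \<Rightarrow> 'a \<Rightarrow> 'a set) \<Rightarrow> 'a list \<Rightarrow> 'a set" where
  "hlprod m [] = {}"
| "hlprod m [c] = {c}"
| "hlprod m (c # cs) = hsetmult m {c} (hlprod m cs)"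

fun lsetsum :: "'a::plus set list \<Rightarrow> 'a set" where
  "lsetsum [] = {}"
| "lsetsum [A] = A"
| "lsetsum (A # As) = setplus A (lsetsum As)"

definition classC :: "('a \<Rightarrow> 'a \<Rightarrow> 'a set) \<Rightarrow> 'a set set" where
  "classC m = {hlprod m cs | cs. cs \<noteq> []}"

definition classFrakC :: "('a::plus \<Rightarrow> 'a \<Rightarrow> 'a set) \<Rightarrow> 'a set set" where
  "classFrakC m = {lsetsum Cs | Cs. Cs \<noteq> [] \<and> set Cs \<subseteq> classC m}"

definition strong_C_hyperideal :: "('a::ab_group_add \<Rightarrow> 'a \<Rightarrow> 'a set) \<Rightarrow> 'a set \<Rightarrow> bool" where
  "strong_C_hyperideal m P \<longleftrightarrow> hyperideal m P \<and>
     (\<forall>D\<in>classFrakC m. D \<inter> P \<noteq> {} \<longrightarrow> D \<subseteq> P)"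

definition sdf_absorbing :: "('a::ab_group_add \<Rightarrow> 'a \<Rightarrow> 'a set) \<Rightarrow> 'a set \<Rightarrow> bool" where
  "sdf_absorbing m P \<longleftrightarrow> hyperideal m P \<and> P \<noteq> UNIV \<and>
     (\<forall>x y. x \<noteq> 0 \<longrightarrow> y \<noteq> 0 \<longrightarrow> setminus (hsq m x) (hsq m y) \<subseteq> P \<longrightarrow>
        x - y \<in> P \<or> x + y \<in> P)"

definition weakly_sdf_absorbing :: "('a::ab_group_add \<Rightarrow> 'a \<Rightarrow> 'a set) \<Rightarrow> 'a set \<Rightarrow> bool" where
  "weakly_sdf_absorbing m P \<longleftrightarrow> hyperideal m P \<and> P \<noteq> UNIV \<and>
     (\<forall>x y. x \<noteq> 0 \<longrightarrow> y \<noteq> 0 \<longrightarrow> 0 \<notin> setminus (hsq m x) (hsq m y) \<longrightarrow>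
        setminus (hsq m x) (hsq m y) \<subseteq> P \<longrightarrow> x - y \<in> P \<or> x + y \<in> P)"

end

theory Submission
  imports Defs
begin

text \<open>Square differences in \<open>H\<^sub>1 \<times> H\<^sub>2\<close> are computed coordinatewise, and both
  coordinates are nonempty sets, so \<open>a\<^sup>2 - b\<^sup>2 \<subseteq> P\<^sub>1 \<times> P\<^sub>2\<close> splits into one condition per
  factor. A non-sdf-absorbing \<open>P\<^sub>1\<close> has a counterexample \<open>(x\<^sub>1, y\<^sub>1)\<close>; paired with \<open>(0, 0)\<close>
  it shows that \<open>P\<^sub>1 \<times> P\<^sub>2\<close> is never sdf-absorbing. Pairing any \<open>(x, y)\<close> of \<open>H\<^sub>1\<close> with a
  counterexample of \<open>P\<^sub>2\<close> gives nonzero elements whose sum and difference lie outside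
  \<open>P\<^sub>1 \<times> P\<^sub>2\<close>, so weak sdf-absorption of \<open>P\<^sub>1 \<times> P\<^sub>2\<close> forces \<open>0 \<in> x\<^sup>2 - y\<^sup>2\<close> whenever
  \<open>x\<^sup>2 - y\<^sup>2 \<subseteq> P\<^sub>1\<close>: this is (ii) \<open>\<Longrightarrow>\<close> (iii). Then (iii) \<open>\<Longrightarrow>\<close> (iv) is the coordinatewise
  splitting, and (iv) makes weak sdf-absorption vacuous.\<close>

abbreviation hsqdiff :: "('a::minus \<Rightarrow> 'a \<Rightarrow> 'a set) \<Rightarrow> 'a \<Rightarrow> 'a \<Rightarrow> 'a set" where
  "hsqdiff m x y \<equiv> setminus (hsq m x) (hsq m y)"

definition sdf_counterexample :: "('a::ab_group_add \<Rightarrow> 'a \<Rightarrow> 'a set) \<Rightarrow> 'a set \<Rightarrow> 'a \<Rightarrow> 'a \<Rightarrow> bool"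
  where "sdf_counterexample m P x y \<longleftrightarrow>
    x \<noteq> 0 \<and> y \<noteq> 0 \<and> hsqdiff m x y \<subseteq> P \<and> x - y \<notin> P \<and> x + y \<notin> P"

lemma not_sdf_absorbing_iff_counterexample:
  assumes "hyperideal m P" and "P \<noteq> UNIV"
  shows "\<not> sdf_absorbing m P \<longleftrightarrow> (\<exists>x y. sdf_counterexample m P x y)"
  using assms unfolding sdf_absorbing_def sdf_counterexample_def by blast

lemma weakly_sdf_absorbing_counterexample_zero:
  assumes "weakly_sdf_absorbing m P" and "sdf_counterexample m P x y"
  shows "0 \<in> hsqdiff m x y"
  using assms unfolding weakly_sdf_absorbing_def sdf_counterexample_def by blast

lemma weakly_sdf_absorbingI_zero_in_hsqdiff:
  assumes "hyperideal m P" and "P \<noteq> UNIV"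
    and "\<And>a b. a \<noteq> 0 \<Longrightarrow> b \<noteq> 0 \<Longrightarrow> hsqdiff m a b \<subseteq> P \<Longrightarrow> 0 \<in> hsqdiff m a b"
  shows "weakly_sdf_absorbing m P"
  using assms unfolding weakly_sdf_absorbing_def by blast

lemma hsqdiff_nonempty:
  assumes "comm_mult_hyperring m"
  shows "hsqdiff m x y \<noteq> {}"
proof -
  have "\<forall>x y. m x y \<noteq> {}"
    using assms unfolding comm_mult_hyperring_def by (rule conjunct1)
  then obtain a b where "a \<in> m x x" "b \<in> m y y" by blast
  then have "a - b \<in> hsqdiff m x y"
    unfolding setminus_def hsq_def by blast
  then show ?thesis by blast
qed

lemma hyperideal_zero: "hyperideal m P \<Longrightarrow> 0 \<in> P"
  unfolding hyperideal_def by (metis all_not_in_conv diff_self)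

lemma hyperideal_hsqdiff_zero:
  assumes "hyperideal m P"
  shows "hsqdiff m 0 0 \<subseteq> P"
proof -
  have "hsq m 0 \<subseteq> P"
    using assms hyperideal_zero[OF assms] unfolding hyperideal_def hsq_def by blast
  then show ?thesis
    using assms unfolding hyperideal_def setminus_def by blast
qed

lemma hyperideal_Times:
  assumes "hyperideal m1 P1" and "hyperideal m2 P2"
  shows "hyperideal (prod_hmult m1 m2) (P1 \<times> P2)"
  unfolding hyperideal_def
proof (intro conjI ballI allI)
  show "P1 \<times> P2 \<noteq> {}"
    using hyperideal_zero[OF assms(1)] hyperideal_zero[OF assms(2)] by blast
next
  fix x y assume "x \<in> P1 \<times> P2" "y \<in> P1 \<times> P2"
  then show "x - y \<in> P1 \<times> P2"
    using assms unfolding hyperideal_def by (simp add: mem_Times_iff)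
next
  fix r x assume "x \<in> P1 \<times> P2"
  then have "m1 (fst r) (fst x) \<subseteq> P1" "m2 (snd r) (snd x) \<subseteq> P2"
    using assms unfolding hyperideal_def by (auto simp: mem_Times_iff)
  then show "prod_hmult m1 m2 r x \<subseteq> P1 \<times> P2"
    unfolding prod_hmult_def by blast
qed

lemma setminus_Times: "setminus (A \<times> B) (C \<times> D) = setminus A C \<times> setminus B D"
  unfolding setminus_def by force

lemma hsqdiff_prod_hmult:
  "hsqdiff (prod_hmult m1 m2) a b = hsqdiff m1 (fst a) (fst b) \<times> hsqdiff m2 (snd a) (snd b)"
  by (simp add: hsq_def prod_hmult_def setminus_Times)

lemma zero_in_hsqdiff_prod_hmult_iff:
  "0 \<in> hsqdiff (prod_hmult m1 m2) a b \<longleftrightarrow>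
     0 \<in> hsqdiff m1 (fst a) (fst b) \<and> 0 \<in> hsqdiff m2 (snd a) (snd b)"
  by (simp add: hsqdiff_prod_hmult mem_Times_iff)

lemma sdf_counterexample_Times1:
  assumes "sdf_counterexample m1 P1 x y" and "hsqdiff m2 u v \<subseteq> P2"
  shows "sdf_counterexample (prod_hmult m1 m2) (P1 \<times> P2) (x, u) (y, v)"
  using assms unfolding sdf_counterexample_def
  by (auto simp: hsqdiff_prod_hmult zero_prod_def)

lemma sdf_counterexample_Times2:
  assumes "hsqdiff m1 x y \<subseteq> P1" and "sdf_counterexample m2 P2 u v"
  shows "sdf_counterexample (prod_hmult m1 m2) (P1 \<times> P2) (x, u) (y, v)"
  using assms unfolding sdf_counterexample_def
  by (auto simp: hsqdiff_prod_hmult zero_prod_def)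

lemma weakly_sdf_absorbing_Times_zero_in_hsqdiff1:
  assumes "weakly_sdf_absorbing (prod_hmult m1 m2) (P1 \<times> P2)"
    and "sdf_counterexample m2 P2 u v" and "hsqdiff m1 x y \<subseteq> P1"
  shows "0 \<in> hsqdiff m1 x y"
  using weakly_sdf_absorbing_counterexample_zero[OF assms(1) sdf_counterexample_Times2[OF assms(3,2)]]
  by (simp add: zero_in_hsqdiff_prod_hmult_iff)

lemma weakly_sdf_absorbing_Times_zero_in_hsqdiff2:
  assumes "weakly_sdf_absorbing (prod_hmult m1 m2) (P1 \<times> P2)"
    and "sdf_counterexample m1 P1 x y" and "hsqdiff m2 u v \<subseteq> P2"
  shows "0 \<in> hsqdiff m2 u v"
  using weakly_sdf_absorbing_counterexample_zero[OF assms(1) sdf_counterexample_Times1[OF assms(2,3)]]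
  by (simp add: zero_in_hsqdiff_prod_hmult_iff)

lemma zero_in_hsqdiff_prod_hmultI:
  assumes "comm_mult_hyperring m1" and "comm_mult_hyperring m2"
    and "\<forall>x y. hsqdiff m1 x y \<subseteq> P1 \<longrightarrow> 0 \<in> hsqdiff m1 x y"
    and "\<forall>u v. hsqdiff m2 u v \<subseteq> P2 \<longrightarrow> 0 \<in> hsqdiff m2 u v"
    and "hsqdiff (prod_hmult m1 m2) a b \<subseteq> P1 \<times> P2"
  shows "0 \<in> hsqdiff (prod_hmult m1 m2) a b"
  using assms hsqdiff_nonempty[OF assms(1)] hsqdiff_nonempty[OF assms(2)]
  by (simp add: hsqdiff_prod_hmult times_subset_iff zero_prod_def)

theorem mainTheorem19:
  fixes m1 :: "'a::ab_group_add \<Rightarrow> 'a \<Rightarrow> 'a set"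
    and m2 :: "'b::ab_group_add \<Rightarrow> 'b \<Rightarrow> 'b set"
    and P1 :: "'a set" and P2 :: "'b set"
  assumes H1: "comm_mult_hyperring m1" "has_identity m1"
    and H2: "comm_mult_hyperring m2" "has_identity m2"
    and P1: "weakly_sdf_absorbing m1 P1" "strong_C_hyperideal m1 P1" "\<not> sdf_absorbing m1 P1"
    and P2: "weakly_sdf_absorbing m2 P2" "strong_C_hyperideal m2 P2" "\<not> sdf_absorbing m2 P2"
  defines "m \<equiv> prod_hmult m1 m2"
  shows "((weakly_sdf_absorbing m (P1 \<times> P2) \<and> \<not> sdf_absorbing m (P1 \<times> P2))
            \<longleftrightarrow> weakly_sdf_absorbing m (P1 \<times> P2))
       \<and> (weakly_sdf_absorbing m (P1 \<times> P2) \<longleftrightarrow>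
            ((\<forall>x y. setminus (hsq m1 x) (hsq m1 y) \<subseteq> P1 \<longrightarrow> 0 \<in> setminus (hsq m1 x) (hsq m1 y)) \<and>
             (\<forall>u v. setminus (hsq m2 u) (hsq m2 v) \<subseteq> P2 \<longrightarrow> 0 \<in> setminus (hsq m2 u) (hsq m2 v))))
       \<and> (((\<forall>x y. setminus (hsq m1 x) (hsq m1 y) \<subseteq> P1 \<longrightarrow> 0 \<in> setminus (hsq m1 x) (hsq m1 y)) \<and>
             (\<forall>u v. setminus (hsq m2 u) (hsq m2 v) \<subseteq> P2 \<longrightarrow> 0 \<in> setminus (hsq m2 u) (hsq m2 v)))
            \<longleftrightarrow> (\<forall>a b. a \<noteq> 0 \<longrightarrow> b \<noteq> 0 \<longrightarrow> setminus (hsq m a) (hsq m b) \<subseteq> P1 \<times> P2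
                   \<longrightarrow> 0 \<in> setminus (hsq m a) (hsq m b)))"
proof -
  let ?W = "weakly_sdf_absorbing m (P1 \<times> P2)"
  let ?C1 = "\<forall>x y. hsqdiff m1 x y \<subseteq> P1 \<longrightarrow> 0 \<in> hsqdiff m1 x y"
  let ?C2 = "\<forall>u v. hsqdiff m2 u v \<subseteq> P2 \<longrightarrow> 0 \<in> hsqdiff m2 u v"
  let ?C4 = "\<forall>a b. a \<noteq> 0 \<longrightarrow> b \<noteq> 0 \<longrightarrow> hsqdiff m a b \<subseteq> P1 \<times> P2 \<longrightarrow> 0 \<in> hsqdiff m a b"
  have I1: "hyperideal m1 P1" "P1 \<noteq> UNIV" and I2: "hyperideal m2 P2" "P2 \<noteq> UNIV"
    using P1(1) P2(1) unfolding weakly_sdf_absorbing_def by auto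
  have I: "hyperideal m (P1 \<times> P2)" "P1 \<times> P2 \<noteq> UNIV"
    using hyperideal_Times[OF I1(1) I2(1)] I1(2) unfolding m_def by auto
  obtain x1 y1 where c1: "sdf_counterexample m1 P1 x1 y1"
    using P1(3) not_sdf_absorbing_iff_counterexample[OF I1] by blast
  obtain x2 y2 where c2: "sdf_counterexample m2 P2 x2 y2"
    using P2(3) not_sdf_absorbing_iff_counterexample[OF I2] by blast
  have not_sdf: "\<not> sdf_absorbing m (P1 \<times> P2)"
    using not_sdf_absorbing_iff_counterexample[OF I]
      sdf_counterexample_Times1[OF c1 hyperideal_hsqdiff_zero[OF I2(1)]]
    unfolding m_def by blast
  have ii_iii: "?W \<longrightarrow> ?C1 \<and> ?C2"
    using weakly_sdf_absorbing_Times_zero_in_hsqdiff1[OF _ c2]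
      weakly_sdf_absorbing_Times_zero_in_hsqdiff2[OF _ c1]
    unfolding m_def by blast
  have iii_iv: "?C1 \<and> ?C2 \<longrightarrow> ?C4"
    using zero_in_hsqdiff_prod_hmultI[OF H1(1) H2(1)] unfolding m_def by blast
  have iv_ii: "?C4 \<longrightarrow> ?W"
    using weakly_sdf_absorbingI_zero_in_hsqdiff[OF I] by blast
  show ?thesis
    using not_sdf ii_iii iii_iv iv_ii by sat
qed

end
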